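(* Let $G$ be a group, $\hat\phi$ a quasimorphism on $G$, and $\hat\phi_{\mathrm h}$ its homogenization. Set $D'_G(\hat\phi)=\sup\{|\hat\phi(g_1g_2g_1^{-1})-\hat\phi(g_2)|: g_1,g_2\in G\}$. Then $D(\hat\phi_{\mathrm h})\le D(\hat\phi)+\tfrac12D'_G(\hat\phi)$.
   Context: A quasimorphism on $G$ is $\hat\phi\colon G\to\mathbb{R}$ with finite defect $D(\hat\phi)=\sup_{g_1,g_2\in G}|\hat\phi(g_1g_2)-\hat\phi(g_1)-\hat\phi(g_2)|$. Its homogenization is $\hat\phi_{\mathrm h}(g)=\lim_{n\to\infty}\hat\phi(g^n)/n$, the unique homogeneous quasimorphism (i.e. $\hat\phi_{\mathrm h}(g^n)=n\hat\phi_{\mathrm h}(g)$ for all $n\in\mathbb{Z}$) at bounded distance from $\hat\phi$. *)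

theory Defs
  imports "HOL-Analysis.Analysis" "HOL-Algebra.Group"
begin

definition defect :: "('a, 'b) monoid_scheme \<Rightarrow> ('a \<Rightarrow> real) \<Rightarrow> real" where
  "defect G f = (SUP p \<in> carrier G \<times> carrier G.
      \<bar>f (fst p \<otimes>\<^bsub>G\<^esub> snd p) - f (fst p) - f (snd p)\<bar>)"

definition quasimorphism :: "('a, 'b) monoid_scheme \<Rightarrow> ('a \<Rightarrow> real) \<Rightarrow> bool" where
  "quasimorphism G f \<longleftrightarrow> (\<exists>C. \<forall>g1\<in>carrier G. \<forall>g2\<in>carrier G.
      \<bar>f (g1 \<otimes>\<^bsub>G\<^esub> g2) - f g1 - f g2\<bar> \<le> C)"

definition homogenization :: "('a, 'b) monoid_scheme \<Rightarrow> ('a \<Rightarrow> real) \<Rightarrow> 'a \<Rightarrow> real" where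
  "homogenization G f g = lim (\<lambda>n::nat. f (g [^]\<^bsub>G\<^esub> n) / real n)"

definition conj_defect :: "('a, 'b) monoid_scheme \<Rightarrow> ('a \<Rightarrow> real) \<Rightarrow> real" where
  "conj_defect G f = (SUP p \<in> carrier G \<times> carrier G.
      \<bar>f (fst p \<otimes>\<^bsub>G\<^esub> snd p \<otimes>\<^bsub>G\<^esub> inv\<^bsub>G\<^esub> (fst p)) - f (snd p)\<bar>)"

end

theory Submission
  imports Defs "HOL-Real_Asymp.Real_Asymp"
begin

text \<open>Write \<open>D = defect G f\<close>, \<open>D' = conj_defect G f\<close> and \<open>R n = a\<^sup>n b\<^sup>n (ab)\<^sup>-\<^sup>n\<close>.
  Up to \<open>3D\<close>, the failure of \<open>f (a\<^sup>n) + f (b\<^sup>n) = f ((ab)\<^sup>n)\<close> is \<open>f (R n) - f 1\<close>.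
  Now \<open>R (n + 2)\<close> is \<open>R n\<close> multiplied on the left by a commutator \<open>P Q P\<^sup>-\<^sup>1 Q\<^sup>-\<^sup>1\<close>, and
  replacing the conjugate \<open>P Q P\<^sup>-\<^sup>1\<close> by \<open>Q\<close> changes \<open>f\<close> by at most \<open>2D + D'\<close>; hence
  \<open>|f (R (2m + 1)) - f 1| \<le> m (2D + D')\<close>.  Dividing by \<open>n = 2m + 1\<close> and letting \<open>m \<rightarrow> \<infinity>\<close>
  gives the bound \<open>D + D'/2\<close> for the homogenization.\<close>

lemma quasi_additive_seq_ratio_close:
  fixes s :: "nat \<Rightarrow> real"
  assumes q: "\<And>m n. \<bar>s (m + n) - s m - s n\<bar> \<le> D" and "m \<ge> 1" "n \<ge> 1"
  shows "\<bar>s m / real m - s n / real n\<bar> \<le> 2 * D / real m + 2 * D / real n"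
proof -
  have D0: "D \<ge> 0" using q[of 0 0] by simp
  have mult: "\<bar>s (k * n) - real k * s n\<bar> \<le> (real k + 1) * D" for k n
  proof (induction k)
    case 0 then show ?case using q[of 0 0] by (simp add: abs_le_iff)
  next
    case (Suc k)
    have "\<bar>s (n + k * n) - s n - s (k * n)\<bar> \<le> D" by (rule q)
    then show ?case using Suc by (simp add: algebra_simps abs_le_iff)
  qed
  have m0: "real m > 0" and n0: "real n > 0" using assms by auto
  have Dn: "D * real n \<le> D * (real m * real n)" and Dm: "D * real m \<le> D * (real m * real n)"
    using assms D0 by (auto intro!: mult_left_mono)
  have "\<bar>s (m * n) / (real m * real n) - s n / real n\<bar> = \<bar>s (m * n) - real m * s n\<bar> / (real m * real n)"
    using m0 n0 by (simp add: field_simps abs_div)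
  also have "\<dots> \<le> (real m + 1) * D / (real m * real n)"
    using mult[of m n] m0 n0 by (simp add: divide_right_mono)
  also have "\<dots> \<le> 2 * D / real n" using m0 n0 Dn Dm by (simp add: field_simps)
  finally have n_close: "\<bar>s (m * n) / (real m * real n) - s n / real n\<bar> \<le> 2 * D / real n" .
  have "\<bar>s (m * n) / (real m * real n) - s m / real m\<bar> = \<bar>s (n * m) - real n * s m\<bar> / (real m * real n)"
    using m0 n0 by (simp add: field_simps abs_div mult.commute)
  also have "\<dots> \<le> (real n + 1) * D / (real m * real n)"
    using mult[of n m] m0 n0 by (simp add: divide_right_mono)
  also have "\<dots> \<le> 2 * D / real m" using m0 n0 Dn Dm by (simp add: field_simps)
  finally have m_close: "\<bar>s (m * n) / (real m * real n) - s m / real m\<bar> \<le> 2 * D / real m" .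
  show ?thesis using n_close m_close by linarith
qed

lemma quasi_additive_seq_ratio_convergent:
  fixes s :: "nat \<Rightarrow> real"
  assumes q: "\<And>m n. \<bar>s (m + n) - s m - s n\<bar> \<le> D"
  shows "convergent (\<lambda>n. s n / real n)"
proof -
  have D0: "D \<ge> 0" using q[of 0 0] by simp
  have "Cauchy (\<lambda>n. s n / real n)"
  proof (rule metric_CauchyI)
    fix e :: real assume e: "e > 0"
    obtain N :: nat where N: "N > 4 * D / e + 1" by (meson reals_Archimedean2)
    have "0 \<le> 4 * D / e" using D0 e by simp
    with N have N1: "N \<ge> 1" by linarith
    have "4 * D < e * real N" using N e by (simp add: field_simps)
    then have small: "2 * D / real N < e / 2" using N1 by (simp add: field_simps)
    have "dist (s m / real m) (s n / real n) < e" if "m \<ge> N" "n \<ge> N" for m n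
    proof -
      have "2 * D / real m \<le> 2 * D / real N" "2 * D / real n \<le> 2 * D / real N"
        using that N1 D0 by (simp_all add: frac_le)
      then show ?thesis
        using quasi_additive_seq_ratio_close[OF q, of m n] that N1 small by (simp add: dist_real_def)
    qed
    then show "\<exists>M. \<forall>m\<ge>M. \<forall>n\<ge>M. dist (s m / real m) (s n / real n) < e" by blast
  qed
  then show ?thesis by (simp add: Cauchy_convergent_iff)
qed

context group
begin

lemma quasimorphism_abs_defect_le:
  assumes "quasimorphism G f" "x \<in> carrier G" "y \<in> carrier G"
  shows "\<bar>f (x \<otimes> y) - f x - f y\<bar> \<le> defect G f"
proof -
  obtain C where C: "\<forall>g1\<in>carrier G. \<forall>g2\<in>carrier G. \<bar>f (g1 \<otimes> g2) - f g1 - f g2\<bar> \<le> C"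
    using assms(1) unfolding quasimorphism_def by blast
  have bdd: "bdd_above ((\<lambda>p. \<bar>f (fst p \<otimes> snd p) - f (fst p) - f (snd p)\<bar>) ` (carrier G \<times> carrier G))"
    using C by (intro bdd_aboveI[of _ C]) auto
  then show ?thesis
    unfolding defect_def using cSUP_upper[OF _ bdd, of "(x, y)"] assms by auto
qed

lemma quasimorphism_abs_conj_defect_le:
  assumes qm: "quasimorphism G f" and "x \<in> carrier G" "y \<in> carrier G"
  shows "\<bar>f (x \<otimes> y \<otimes> inv x) - f y\<bar> \<le> conj_defect G f"
proof -
  obtain C where C: "\<forall>g1\<in>carrier G. \<forall>g2\<in>carrier G. \<bar>f (g1 \<otimes> g2) - f g1 - f g2\<bar> \<le> C"
    using qm unfolding quasimorphism_def by blast
  have "\<bar>f (u \<otimes> v \<otimes> inv u) - f v\<bar> \<le> 4 * C" if u: "u \<in> carrier G" and v: "v \<in> carrier G" for u v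
  proof -
    have "\<bar>f (u \<otimes> v \<otimes> inv u) - f (u \<otimes> v) - f (inv u)\<bar> \<le> C"
      and "\<bar>f (u \<otimes> v) - f u - f v\<bar> \<le> C"
      and "\<bar>f (u \<otimes> inv u) - f u - f (inv u)\<bar> \<le> C"
      and "\<bar>f (\<one> \<otimes> \<one>) - f \<one> - f \<one>\<bar> \<le> C"
      using u v by (intro C[rule_format]; simp)+
    then show ?thesis using u by (simp add: abs_le_iff)
  qed
  then have bdd: "bdd_above ((\<lambda>p. \<bar>f (fst p \<otimes> snd p \<otimes> inv (fst p)) - f (snd p)\<bar>) ` (carrier G \<times> carrier G))"
    by (intro bdd_aboveI[of _ "4 * C"]) auto
  then show ?thesis
    unfolding conj_defect_def using cSUP_upper[OF _ bdd, of "(x, y)"] assms by auto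
qed

lemma quasimorphism_conj_mult_estimate:
  assumes qm: "quasimorphism G f" and P: "P \<in> carrier G" and Q: "Q \<in> carrier G" and w: "w \<in> carrier G"
  shows "\<bar>f (P \<otimes> Q \<otimes> inv P \<otimes> w) - f (Q \<otimes> w)\<bar> \<le> 2 * defect G f + conj_defect G f"
proof -
  have "\<bar>f (P \<otimes> Q \<otimes> inv P \<otimes> w) - f (P \<otimes> Q \<otimes> inv P) - f w\<bar> \<le> defect G f"
    using P Q w by (intro quasimorphism_abs_defect_le[OF qm]) auto
  moreover have "\<bar>f (P \<otimes> Q \<otimes> inv P) - f Q\<bar> \<le> conj_defect G f"
    by (rule quasimorphism_abs_conj_defect_le[OF qm P Q])
  moreover have "\<bar>f (Q \<otimes> w) - f Q - f w\<bar> \<le> defect G f"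
    by (rule quasimorphism_abs_defect_le[OF qm Q w])
  ultimately show ?thesis by (simp add: abs_le_iff)
qed

definition power_quotient :: "'a \<Rightarrow> 'a \<Rightarrow> nat \<Rightarrow> 'a" where
  "power_quotient a b n = a [^] n \<otimes> b [^] n \<otimes> inv ((a \<otimes> b) [^] n)"

lemma power_quotient_closed [intro, simp]:
  "a \<in> carrier G \<Longrightarrow> b \<in> carrier G \<Longrightarrow> power_quotient a b n \<in> carrier G"
  unfolding power_quotient_def by auto

lemma mult_inv_cancel_left: "x \<in> carrier G \<Longrightarrow> y \<in> carrier G \<Longrightarrow> x \<otimes> (inv x \<otimes> y) = y"
  by (simp add: m_assoc[symmetric])

lemma inv_mult_cancel_left: "x \<in> carrier G \<Longrightarrow> y \<in> carrier G \<Longrightarrow> inv x \<otimes> (x \<otimes> y) = y"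
  by (simp add: m_assoc[symmetric])

text \<open>Both sides equal \<open>a\<^sup>n a a b b\<^sup>n a\<^sup>-\<^sup>1 b\<^sup>-\<^sup>1 a\<^sup>-\<^sup>1 (ab)\<^sup>-\<^sup>n\<close>, using that \<open>b\<close> commutes with \<open>b\<^sup>n\<close>.\<close>

lemma power_quotient_Suc_Suc:
  fixes n :: nat
  assumes a: "a \<in> carrier G" and b: "b \<in> carrier G"
  defines "A \<equiv> a [^] n" and "B \<equiv> b [^] n" and "C \<equiv> (a \<otimes> b) [^] n"
  defines "P \<equiv> A \<otimes> a \<otimes> a \<otimes> b \<otimes> inv A" and "Q \<equiv> A \<otimes> B \<otimes> inv (A \<otimes> a)"
  shows "power_quotient a b (Suc (Suc n)) = P \<otimes> Q \<otimes> inv P \<otimes> (inv Q \<otimes> power_quotient a b n)"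
proof -
  have [simp]: "A \<in> carrier G" "B \<in> carrier G" "C \<in> carrier G"
    unfolding A_def B_def C_def using a b by auto
  have bB: "b \<otimes> (B \<otimes> z) = B \<otimes> (b \<otimes> z)" if "z \<in> carrier G" for z
    using that b unfolding B_def by (metis m_assoc nat_pow_Suc nat_pow_Suc2 nat_pow_closed)
  have lhs: "power_quotient a b (Suc (Suc n)) =
      A \<otimes> (a \<otimes> (a \<otimes> (B \<otimes> (b \<otimes> (b \<otimes> (inv b \<otimes> (inv a \<otimes> (inv b \<otimes> (inv a \<otimes> inv C)))))))))"
    unfolding power_quotient_def A_def B_def C_def using a b by (simp add: m_assoc inv_mult_group)
  have rhs: "P \<otimes> Q \<otimes> inv P \<otimes> (inv Q \<otimes> power_quotient a b n) =
      A \<otimes> (a \<otimes> (a \<otimes> (b \<otimes> (B \<otimes> (inv a \<otimes> (inv b \<otimes> (inv a \<otimes> inv C)))))))"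
    unfolding power_quotient_def P_def Q_def using a b
    by (simp add: m_assoc inv_mult_group mult_inv_cancel_left inv_mult_cancel_left
        A_def[symmetric] B_def[symmetric] C_def[symmetric])
  show ?thesis unfolding lhs rhs using a b by (simp add: mult_inv_cancel_left bB)
qed

lemma quasimorphism_power_quotient_odd_estimate:
  assumes qm: "quasimorphism G f" and a: "a \<in> carrier G" and b: "b \<in> carrier G"
  shows "\<bar>f (power_quotient a b (2 * m + 1)) - f \<one>\<bar> \<le> real m * (2 * defect G f + conj_defect G f)"
proof (induction m)
  case 0
  have "power_quotient a b 1 = \<one>" unfolding power_quotient_def using a b by simp
  then show ?case by simp
next
  case (Suc m)
  define n where "n = 2 * m + 1"
  define P where "P = a [^] n \<otimes> a \<otimes> a \<otimes> b \<otimes> inv (a [^] n)"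
  define Q where "Q = a [^] n \<otimes> b [^] n \<otimes> inv (a [^] n \<otimes> a)"
  have PQ: "P \<in> carrier G" "Q \<in> carrier G" unfolding P_def Q_def using a b by auto
  have "power_quotient a b (2 * Suc m + 1) = P \<otimes> Q \<otimes> inv P \<otimes> (inv Q \<otimes> power_quotient a b n)"
    using power_quotient_Suc_Suc[OF a b, of n] unfolding P_def Q_def n_def by (simp add: numeral_eq_Suc)
  moreover have "Q \<otimes> (inv Q \<otimes> power_quotient a b n) = power_quotient a b n"
    using PQ a b by (simp add: mult_inv_cancel_left)
  ultimately have "\<bar>f (power_quotient a b (2 * Suc m + 1)) - f (power_quotient a b n)\<bar>
      \<le> 2 * defect G f + conj_defect G f"
    using quasimorphism_conj_mult_estimate[OF qm PQ, of "inv Q \<otimes> power_quotient a b n"] PQ a b by auto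
  then show ?case using Suc.IH unfolding n_def by (simp add: algebra_simps abs_le_iff)
qed

lemma quasimorphism_power_estimate:
  assumes qm: "quasimorphism G f" and a: "a \<in> carrier G" and b: "b \<in> carrier G"
  shows "\<bar>f (a [^] n) + f (b [^] n) - f ((a \<otimes> b) [^] n)\<bar>
      \<le> 3 * defect G f + \<bar>f (power_quotient a b n) - f \<one>\<bar>"
proof -
  define A where "A = a [^] n"
  define B where "B = b [^] n"
  define C where "C = (a \<otimes> b) [^] n"
  have c: "A \<in> carrier G" "B \<in> carrier G" "C \<in> carrier G" unfolding A_def B_def C_def using a b by auto
  have "\<bar>f (A \<otimes> B \<otimes> inv C) - f (A \<otimes> B) - f (inv C)\<bar> \<le> defect G f"
    and "\<bar>f (A \<otimes> B) - f A - f B\<bar> \<le> defect G f"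
    and "\<bar>f (C \<otimes> inv C) - f C - f (inv C)\<bar> \<le> defect G f"
    using c by (intro quasimorphism_abs_defect_le[OF qm]; simp)+
  moreover have "C \<otimes> inv C = \<one>" using c by simp
  moreover have "power_quotient a b n = A \<otimes> B \<otimes> inv C" unfolding power_quotient_def A_def B_def C_def ..
  ultimately show ?thesis unfolding A_def[symmetric] B_def[symmetric] C_def[symmetric] by auto
qed

lemma homogenization_LIMSEQ:
  assumes qm: "quasimorphism G f" and g: "g \<in> carrier G"
  shows "(\<lambda>n. f (g [^] n) / real n) \<longlonglongrightarrow> homogenization G f g"
proof -
  have "\<bar>f (g [^] (m + n)) - f (g [^] m) - f (g [^] n)\<bar> \<le> defect G f" for m n :: nat
    using quasimorphism_abs_defect_le[OF qm, of "g [^] m" "g [^] n"] g by (simp add: nat_pow_mult)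
  then have "convergent (\<lambda>n. f (g [^] n) / real n)"
    by (rule quasi_additive_seq_ratio_convergent)
  then show ?thesis unfolding homogenization_def by (simp add: convergent_LIMSEQ_iff)
qed

lemma homogenization_abs_defect_le:
  assumes qm: "quasimorphism G f" and x: "x \<in> carrier G" and y: "y \<in> carrier G"
  shows "\<bar>homogenization G f (x \<otimes> y) - homogenization G f x - homogenization G f y\<bar>
      \<le> defect G f + conj_defect G f / 2"
proof -
  let ?D = "defect G f" and ?D' = "conj_defect G f" and ?h = "homogenization G f"
  define r :: "nat \<Rightarrow> nat" where "r m = 2 * m + 1" for m
  define e where "e m = (f (x [^] r m) + f (y [^] r m) - f ((x \<otimes> y) [^] r m)) / real (r m)" for m
  have "strict_mono r" unfolding r_def by (rule strict_monoI) simp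
  then have odd_LIMSEQ: "(\<lambda>m. f (g [^] r m) / real (r m)) \<longlonglongrightarrow> ?h g" if "g \<in> carrier G" for g
    using LIMSEQ_subseq_LIMSEQ[OF homogenization_LIMSEQ[OF qm that]] by (simp add: o_def)
  have e_LIMSEQ: "(\<lambda>m. \<bar>e m\<bar>) \<longlonglongrightarrow> \<bar>?h x + ?h y - ?h (x \<otimes> y)\<bar>"
    unfolding e_def diff_divide_distrib add_divide_distrib using x y
    by (intro tendsto_intros odd_LIMSEQ) auto
  have bound_LIMSEQ: "(\<lambda>m::nat. c + d / real (2 * m + 1)) \<longlonglongrightarrow> c" for c d :: real
    by real_asymp
  have e_bound: "\<bar>e m\<bar> \<le> (?D + ?D' / 2) + (2 * ?D - ?D' / 2) / real (2 * m + 1)" for m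
  proof -
    have "\<bar>f (x [^] r m) + f (y [^] r m) - f ((x \<otimes> y) [^] r m)\<bar> \<le> 3 * ?D + real m * (2 * ?D + ?D')"
      using quasimorphism_power_estimate[OF qm x y, of "r m"]
        quasimorphism_power_quotient_odd_estimate[OF qm x y, of m]
      unfolding r_def by linarith
    also have "\<dots> = real (r m) * ((?D + ?D' / 2) + (2 * ?D - ?D' / 2) / real (2 * m + 1))"
      unfolding r_def by (simp add: field_simps)
    finally show ?thesis
      unfolding e_def r_def by (simp add: abs_div divide_le_eq mult.commute)
  qed
  have "\<bar>?h x + ?h y - ?h (x \<otimes> y)\<bar> \<le> ?D + ?D' / 2"
    using e_bound by (intro tendsto_le[OF _ bound_LIMSEQ[of "?D + ?D' / 2" "2 * ?D - ?D' / 2"] e_LIMSEQ]) auto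
  then show ?thesis by (simp add: abs_le_iff)
qed

end

theorem proposition2p15:
  fixes G :: "('a, 'b) monoid_scheme" and f :: "'a \<Rightarrow> real"
  assumes "group G"
    and "quasimorphism G f"
  shows "defect G (homogenization G f) \<le> defect G f + conj_defect G f / 2"
  unfolding defect_def[of G "homogenization G f"]
  using group.homogenization_abs_defect_le[OF assms] group.subgroup_self[OF assms(1)]
  by (intro cSUP_least) (auto dest: subgroup.one_closed)

end
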